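(* Let $A$ be a semicircular Klaus–Shaw potential. Then $\Phi(\mathrm is)>0$ for $0<s<A_{\max}$ and $\Phi(\mathrm iA_{\max})=0$. Moreover $\lambda\mapsto\Phi(\lambda)$ extends to an even analytic function at $\lambda=0$ with convergent series $\Phi(\lambda)=\sum_{k=0}^\infty\Phi_k\lambda^{2k}$ near $0$, where the coefficients $\Phi_k$ are real, and $\Phi_0>0$, $\Phi_1>0$.
   Context: Let $X_-<X_+$. A semicircular Klaus–Shaw potential is $A:\mathbb R\to[0,\infty)$ such that: $A$ has support $[X_-,X_+]$ and $A(x)=u(x)\sqrt{(X_+-x)(x-X_-)}$ there, where $u\ge c>0$ on $[X_-,X_+]$ and $u$ extends analytically to a complex neighborhood of $[X_-,X_+]$; $A\in L^1(\mathbb R)\cap C^2(\mathbb R)$ with a unique maximizer $x_0$; $A''(x_0)<0$. $A_{\max}:=A(x_0)$; for $0<s<A_{\max}$, $x_-(s)<x_+(s)$ are the solutions of $A(x)=s$. The phase integral is $\Phi(\mathrm is):=\int_{x_-(s)}^{x_+(s)}\sqrt{A(x)^2-s^2}\,dx$ for $0<s<A_{\max}$, viewed as a function of $\lambda=\mathrm is$ (with $\Phi(\mathrm iA_{\max})$ its limiting value). *)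

theory Defs
  imports "HOL-Analysis.Analysis"
begin

definition Amax :: "(real \<Rightarrow> real) \<Rightarrow> real" where
  "Amax A = Sup (range A)"

definition semicircular_KS :: "(real \<Rightarrow> real) \<Rightarrow> real \<Rightarrow> real \<Rightarrow> bool" where
  "semicircular_KS A Xm Xp \<longleftrightarrow>
     Xm < Xp \<and> (\<forall>x. 0 \<le> A x) \<and>
     closure {x. A x \<noteq> 0} = {Xm..Xp} \<and>
     (\<exists>u c. c > 0 \<and>
        (\<forall>x\<in>{Xm..Xp}. c \<le> u x \<and> A x = u x * sqrt ((Xp - x) * (x - Xm))) \<and>
        (\<exists>U g. open U \<and> complex_of_real ` {Xm..Xp} \<subseteq> U \<and> g holomorphic_on U \<and>
           (\<forall>x\<in>{Xm..Xp}. g (complex_of_real x) = complex_of_real (u x)))) \<and>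
     integrable lborel A \<and>
     continuous_on UNIV A \<and>
     (\<forall>x\<in>{Xm<..<Xp}. A differentiable (at x) \<and> deriv A differentiable (at x)) \<and>
     continuous_on {Xm<..<Xp} (deriv (deriv A)) \<and>
     (\<exists>x0. (\<forall>x. x \<noteq> x0 \<longrightarrow> A x < A x0) \<and> deriv (deriv A) x0 < 0) \<and>
     (\<forall>s. 0 < s \<and> s < Amax A \<longrightarrow> card {x. A x = s} = 2)"

definition xminus :: "(real \<Rightarrow> real) \<Rightarrow> real \<Rightarrow> real" where
  "xminus A s = Min {x. A x = s}"

definition xplus :: "(real \<Rightarrow> real) \<Rightarrow> real \<Rightarrow> real" where
  "xplus A s = Max {x. A x = s}"

text \<open>Phi A s stands for the phase integral at lambda = i s.\<close>
definition Phi :: "(real \<Rightarrow> real) \<Rightarrow> real \<Rightarrow> real" where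
  "Phi A s = integral {xminus A s..xplus A s} (\<lambda>x. sqrt ((A x)\<^sup>2 - s\<^sup>2))"

end

theory Submission
  imports Defs "HOL-Complex_Analysis.Complex_Analysis"
begin

(* Put t = s^2, so that Phi is the integral of sqrt (A^2 - t) between the two points where
   A^2 = t.  By the semicircular form, A^2 continues to a holomorphic function h with simple
   zeros at Xm and Xp, so near t = 0 these two points are phi t for local inverses phi of h,
   holomorphic in t.  Split the integral at fixed points a < b.  The middle piece is
   holomorphic in t because A^2 stays above t on [a, b]; each end piece becomes, after the
   substitutions x = phi y and y = t + (H - t) sigma, the holomorphic function
   (H - t)^(3/2) * (integral over sigma in [0, 1] of sqrt sigma * phi' (t + (H - t) sigma)).
   Hence Phi s = Re (G (s^2)) with G holomorphic at 0, and the Taylor series of G in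
   s^2 = - lambda^2 gives the even expansion, with coefficients (-1)^k Re a_k.  Finally
   Phi_0 = Re (G 0) and Phi_1 = - Re (G' 0) are positive because Phi is positive and, as a
   function of t, decreases at a rate bounded below by a positive constant. *)

lemma holomorphic_local_inverse:
  fixes f :: "complex \<Rightarrow> complex"
  assumes holf: "f holomorphic_on S" and S: "open S" "w \<in> S" and d: "deriv f w \<noteq> 0"
  obtains r e \<phi> where "r > 0" "e > 0" "inj_on f (ball w r)" "\<phi> holomorphic_on ball (f w) e"
    "\<And>y. y \<in> ball (f w) e \<Longrightarrow> \<phi> y \<in> ball w r \<and> f (\<phi> y) = y"
proof -
  obtain r where r: "r > 0" "ball w r \<subseteq> S" "inj_on f (ball w r)"
    using has_complex_derivative_locally_injective[OF holf S(2) S(1) d] by blast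
  have hol_ball: "f holomorphic_on ball w r"
    using holf r(2) holomorphic_on_subset by blast
  obtain g where g: "g holomorphic_on f ` ball w r" "\<And>z. z \<in> ball w r \<Longrightarrow> g (f z) = z"
    using holomorphic_has_inverse[OF hol_ball open_ball r(3)] by metis
  have "open (f ` ball w r)"
    using open_mapping_thm3[OF hol_ball open_ball r(3)] .
  moreover have "f w \<in> f ` ball w r"
    using r(1) by auto
  ultimately obtain e where e: "e > 0" "ball (f w) e \<subseteq> f ` ball w r"
    using open_contains_ball by blast
  show ?thesis
  proof (rule that[OF r(1) e(1) r(3)])
    show "g holomorphic_on ball (f w) e"
      using g(1) e(2) holomorphic_on_subset by blast
    fix y assume "y \<in> ball (f w) e"
    then obtain z where "z \<in> ball w r" "y = f z"
      using e(2) by blast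
    then show "g y \<in> ball w r \<and> f (g y) = y"
      using g(2) by auto
  qed
qed

lemma convex_segment_towards:
  fixes z H :: complex
  assumes "convex S" "z \<in> S" "H \<in> S" "\<sigma> \<in> {0..1}"
  shows "z + (H - z) * of_real \<sigma> \<in> S"
proof -
  have "z + (H - z) * of_real \<sigma> = (1 - \<sigma>) *\<^sub>R z + \<sigma> *\<^sub>R H"
    by (simp add: scaleR_conv_of_real algebra_simps)
  then show ?thesis
    using assms unfolding convex_alt by auto
qed

lemma holomorphic_on_integral_towards:
  fixes \<psi> :: "complex \<Rightarrow> complex" and w :: "real \<Rightarrow> real"
  assumes hol: "\<psi> holomorphic_on S" and S: "open S" "convex S" "H \<in> S"
    and w: "continuous_on {0..1} w"
  shows "(\<lambda>z. integral {0..1} (\<lambda>\<sigma>. of_real (w \<sigma>) * \<psi> (z + (H - z) * of_real \<sigma>))) holomorphic_on S"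
proof -
  define p where "p = (\<lambda>z (\<sigma>::real). z + (H - z) * of_real \<sigma>)"
  have p: "p z \<sigma> \<in> S" if "z \<in> S" "\<sigma> \<in> cbox 0 1" for z \<sigma>
    using convex_segment_towards[OF S(2) that(1) S(3)] that(2) by (simp add: p_def)
  have p_cont: "continuous_on X (\<lambda>x. p (f x) (g x))" if "continuous_on X f" "continuous_on X g" for X f g
    unfolding p_def by (intro continuous_intros that)
  have hol': "deriv \<psi> holomorphic_on S"
    using hol S(1) by (rule holomorphic_deriv)
  have "(\<lambda>z. integral (cbox 0 1) (\<lambda>\<sigma>. of_real (w \<sigma>) * \<psi> (p z \<sigma>))) holomorphic_on S"
  proof (rule leibniz_rule_holomorphic[where fx = "\<lambda>z \<sigma>. of_real (w \<sigma>) * (deriv \<psi> (p z \<sigma>) * (1 - of_real \<sigma>))"])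
    fix z and \<sigma> :: real assume z\<sigma>: "z \<in> S" "\<sigma> \<in> cbox 0 1"
    have "(\<psi> has_field_derivative deriv \<psi> (p z \<sigma>)) (at (p z \<sigma>))"
      using hol S(1) p[OF z\<sigma>] holomorphic_derivI by blast
    moreover have "((\<lambda>z. p z \<sigma>) has_field_derivative 1 - of_real \<sigma>) (at z)"
      unfolding p_def by (auto intro!: derivative_eq_intros)
    ultimately have "((\<lambda>z. \<psi> (p z \<sigma>)) has_field_derivative deriv \<psi> (p z \<sigma>) * (1 - of_real \<sigma>)) (at z)"
      by (rule DERIV_chain2)
    then show "((\<lambda>z. of_real (w \<sigma>) * \<psi> (p z \<sigma>)) has_field_derivative
        of_real (w \<sigma>) * (deriv \<psi> (p z \<sigma>) * (1 - of_real \<sigma>))) (at z within S)"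
      by (rule has_field_derivative_at_within[OF DERIV_cmult])
  next
    fix z assume z: "z \<in> S"
    have "continuous_on {0..1} (\<lambda>\<sigma>. \<psi> (p z \<sigma>))"
      using p[OF z] by (intro continuous_on_compose2[OF holomorphic_on_imp_continuous_on[OF hol]] p_cont)
        (auto simp: cbox_interval intro: continuous_on_const continuous_on_id)
    then have "continuous_on {0..1} (\<lambda>\<sigma>. of_real (w \<sigma>) * \<psi> (p z \<sigma>))"
      by (intro continuous_on_mult continuous_on_of_real w)
    then show "(\<lambda>\<sigma>. of_real (w \<sigma>) * \<psi> (p z \<sigma>)) integrable_on cbox 0 1"
      by (simp add: integrable_continuous_real)
  next
    have "continuous_on (S \<times> cbox 0 1) (\<lambda>x. deriv \<psi> (p (fst x) (snd x)))"
      using p by (intro continuous_on_compose2[OF holomorphic_on_imp_continuous_on[OF hol']] p_cont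
          continuous_on_fst continuous_on_snd continuous_on_id) auto
    moreover have "continuous_on (S \<times> cbox 0 1) (\<lambda>x. w (snd x))"
      by (intro continuous_on_compose2[OF w] continuous_on_snd continuous_on_id) (auto simp: cbox_interval)
    ultimately show "continuous_on (S \<times> cbox 0 1) (\<lambda>(z, \<sigma>). of_real (w \<sigma>) * (deriv \<psi> (p z \<sigma>) * (1 - of_real \<sigma>)))"
      unfolding split_beta by (intro continuous_intros)
  qed (rule S(2))
  then show ?thesis
    by (simp add: p_def cbox_interval)
qed

lemma ball_subset_Re_halfspace: "ball 0 r \<subseteq> {z :: complex. Re z < r}"
proof
  fix z :: complex assume "z \<in> ball 0 r"
  then show "z \<in> {z. Re z < r}"
    using complex_Re_le_cmod[of z] by simp
qed

lemma holomorphic_on_integral_csqrt: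
  fixes B :: "real \<Rightarrow> real"
  assumes B: "continuous_on {a..b} B" and B_ge: "\<And>x. x \<in> {a..b} \<Longrightarrow> d \<le> B x"
  shows "(\<lambda>z. integral {a..b} (\<lambda>x. csqrt (of_real (B x) - z))) holomorphic_on {z. Re z < d}"
proof -
  have not_nonpos: "of_real (B x) - z \<notin> \<real>\<^sub>\<le>\<^sub>0" if "x \<in> {a..b}" "Re z < d" for x z
    using B_ge[OF that(1)] that(2) by (auto simp: complex_nonpos_Reals_iff)
  have "(\<lambda>z. integral (cbox a b) (\<lambda>x. csqrt (of_real (B x) - z))) holomorphic_on {z. Re z < d}"
  proof (rule leibniz_rule_holomorphic[where fx = "\<lambda>z x. inverse (2 * csqrt (of_real (B x) - z)) * - 1"])
    fix z and x :: real assume "z \<in> {z. Re z < d}" "x \<in> cbox a b"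
    then have "(csqrt has_field_derivative inverse (2 * csqrt (of_real (B x) - z))) (at (of_real (B x) - z))"
      using not_nonpos by (intro has_field_derivative_csqrt) (auto simp: cbox_interval)
    moreover have "((\<lambda>z. of_real (B x) - z) has_field_derivative - 1) (at z)"
      by (auto intro!: derivative_eq_intros)
    ultimately have "((\<lambda>z. csqrt (of_real (B x) - z)) has_field_derivative
        inverse (2 * csqrt (of_real (B x) - z)) * - 1) (at z)"
      by (rule DERIV_chain2)
    then show "((\<lambda>z. csqrt (of_real (B x) - z)) has_field_derivative
        inverse (2 * csqrt (of_real (B x) - z)) * - 1) (at z within {z. Re z < d})"
      by (rule has_field_derivative_at_within)
  next
    fix z assume "z \<in> {z. Re z < d}"
    then have "continuous_on {a..b} (\<lambda>x. csqrt (of_real (B x) - z))"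
      using not_nonpos by (intro continuous_on_compose2[OF continuous_on_csqrt]) (auto intro!: continuous_intros B)
    then show "(\<lambda>x. csqrt (of_real (B x) - z)) integrable_on cbox a b"
      by (simp add: integrable_continuous_real)
  next
    have "continuous_on ({z. Re z < d} \<times> cbox a b) (\<lambda>p. csqrt (of_real (B (snd p)) - fst p))"
      using not_nonpos
      by (intro continuous_on_compose2[OF continuous_on_csqrt])
        (auto intro!: continuous_intros continuous_on_compose2[OF B] simp: cbox_interval)
    moreover have "csqrt (of_real (B (snd p)) - fst p) \<noteq> 0" if "p \<in> {z. Re z < d} \<times> cbox a b" for p
      using not_nonpos[of "snd p" "fst p"] that by (auto simp: cbox_interval)
    ultimately show "continuous_on ({z. Re z < d} \<times> cbox a b) (\<lambda>(z, x). inverse (2 * csqrt (of_real (B x) - z)) * - 1)"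
      unfolding split_beta by (intro continuous_intros) auto
  qed (rule convex_halfspace_Re_lt)
  then show ?thesis
    by (simp add: cbox_interval)
qed

lemma integral_csqrt_of_real:
  fixes B :: "real \<Rightarrow> real"
  assumes B: "continuous_on {a..b} B" and t: "\<And>x. x \<in> {a..b} \<Longrightarrow> t \<le> B x"
  shows "integral {a..b} (\<lambda>x. csqrt (of_real (B x) - of_real t)) = of_real (integral {a..b} (\<lambda>x. sqrt (B x - t)))"
proof -
  have "integral {a..b} (\<lambda>x. csqrt (of_real (B x) - of_real t)) = integral {a..b} (\<lambda>x. of_real (sqrt (B x - t)))"
    using t by (intro integral_cong) (simp add: csqrt_of_real flip: of_real_diff)
  also have "\<dots> = of_real (integral {a..b} (\<lambda>x. sqrt (B x - t)))"
  proof (intro integral_unique has_integral_of_real integrable_integral integrable_continuous_interval)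
    show "continuous_on {a..b} (\<lambda>x. sqrt (B x - t))"
      using B by (intro continuous_intros)
  qed
  finally show ?thesis .
qed

lemma deriv_square_times_quadratic_nonzero:
  fixes g :: "complex \<Rightarrow> complex"
  assumes g: "g holomorphic_on U" "open U" "w \<in> U" "g w \<noteq> 0" and w: "w = p \<or> w = q" and "p \<noteq> q"
  shows "deriv (\<lambda>z. (g z)\<^sup>2 * (q - z) * (z - p)) w \<noteq> 0"
proof -
  have "((\<lambda>z. (g z)\<^sup>2 * (q - z) * (z - p)) has_field_derivative
      2 * g w * deriv g w * (q - w) * (w - p) + (g w)\<^sup>2 * ((q - w) - (w - p))) (at w)"
    by (auto intro!: derivative_eq_intros holomorphic_derivI[OF g(1-3)] simp: algebra_simps)
  then have "deriv (\<lambda>z. (g z)\<^sup>2 * (q - z) * (z - p)) w = (g w)\<^sup>2 * ((q - w) - (w - p))"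
    using w by (auto dest!: DERIV_imp_deriv)
  then show ?thesis
    using assms by auto
qed

(* If phi inverts A^2, this is the integral of sqrt (A x ^ 2 - z) over x from phi z to phi H,
   rewritten by the substitutions x = phi y and y = z + (H - z) sigma; in this form it is
   holomorphic in z. *)
definition branch_integral :: "(complex \<Rightarrow> complex) \<Rightarrow> real \<Rightarrow> complex \<Rightarrow> complex" where
  "branch_integral \<phi> H z = (of_real H - z) * csqrt (of_real H - z) *
     integral {0..1} (\<lambda>\<sigma>. of_real (sqrt \<sigma>) * deriv \<phi> (z + (of_real H - z) * of_real \<sigma>))"

lemma holomorphic_branch_integral:
  assumes \<phi>: "\<phi> holomorphic_on ball 0 e" and H: "0 < H" "H < e"
  shows "branch_integral \<phi> H holomorphic_on ball 0 H"
proof -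
  have "(\<lambda>z. integral {0..1} (\<lambda>\<sigma>. of_real (sqrt \<sigma>) * deriv \<phi> (z + (of_real H - z) * of_real \<sigma>)))
      holomorphic_on ball 0 e"
    using H by (intro holomorphic_on_integral_towards holomorphic_deriv[OF \<phi>] continuous_on_real_sqrt) auto
  then have "(\<lambda>z. integral {0..1} (\<lambda>\<sigma>. of_real (sqrt \<sigma>) * deriv \<phi> (z + (of_real H - z) * of_real \<sigma>)))
      holomorphic_on ball 0 H"
    by (rule holomorphic_on_subset) (use H in auto)
  moreover have "of_real H - z \<notin> \<real>\<^sub>\<le>\<^sub>0" if "z \<in> ball 0 H" for z :: complex
  proof -
    have "Re z < H"
      using that ball_subset_Re_halfspace by blast
    then show ?thesis
      by (auto simp: complex_nonpos_Reals_iff)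
  qed
  ultimately show ?thesis
    unfolding branch_integral_def fun_eq_iff by (intro holomorphic_intros) auto
qed

lemma has_integral_level_substitution:
  fixes A g g' :: "real \<Rightarrow> real"
  assumes A: "continuous_on UNIV A"
    and g': "\<And>\<sigma>. \<sigma> \<in> {0..1} \<Longrightarrow> (g has_field_derivative g' \<sigma>) (at \<sigma> within {0..1})"
    and level: "\<And>\<sigma>. \<sigma> \<in> {0..1} \<Longrightarrow> (A (g \<sigma>))\<^sup>2 = t + c * \<sigma>"
  shows "((\<lambda>\<sigma>. sqrt (c * \<sigma>) * g' \<sigma>) has_integral
      integral {g 0..g 1} (\<lambda>x. sqrt ((A x)\<^sup>2 - t)) - integral {g 1..g 0} (\<lambda>x. sqrt ((A x)\<^sup>2 - t))) {0..1}"
proof -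
  have g: "continuous_on {0..1} g"
    using g' by (rule DERIV_continuous_on)
  obtain a where a: "g ` {0..1} \<subseteq> cbox (-a) a"
    using compact_imp_bounded[OF compact_continuous_image[OF g]] bounded_subset_cbox_symmetric by blast
  have "continuous_on {-a..a} (\<lambda>x. sqrt ((A x)\<^sup>2 - t))"
    by (intro continuous_intros continuous_on_subset[OF A]) auto
  then have "((\<lambda>\<sigma>. g' \<sigma> *\<^sub>R sqrt ((A (g \<sigma>))\<^sup>2 - t)) has_integral
      integral {g 0..g 1} (\<lambda>x. sqrt ((A x)\<^sup>2 - t)) - integral {g 1..g 0} (\<lambda>x. sqrt ((A x)\<^sup>2 - t))) {0..1}"
    using a g g' by (intro has_integral_substitution_general[of "{}"]) (auto simp: cbox_interval)
  then show ?thesis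
    by (rule has_integral_eq[rotated]) (simp add: level)
qed

lemma segment_param_bounds:
  fixes t H \<sigma> :: real
  assumes "t \<le> H" "\<sigma> \<in> {0..1}"
  shows "t \<le> t + (H - t) * \<sigma>" "t + (H - t) * \<sigma> \<le> H"
proof -
  have "0 \<le> (H - t) * \<sigma>" "0 \<le> (H - t) * (1 - \<sigma>)"
    using assms by auto
  then show "t \<le> t + (H - t) * \<sigma>" "t + (H - t) * \<sigma> \<le> H"
    by (simp_all add: algebra_simps)
qed

lemma has_integral_Re_branch_integral:
  assumes \<phi>: "\<phi> holomorphic_on ball 0 e" and tH: "0 \<le> t" "t < H" "H < e"
  shows "((\<lambda>\<sigma>. sqrt ((H - t) * \<sigma>) * ((H - t) * Re (deriv \<phi> (of_real (t + (H - t) * \<sigma>)))))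
    has_integral Re (branch_integral \<phi> H (of_real t))) {0..1}"
proof -
  define I where "I = integral {0..1} (\<lambda>\<sigma>. of_real (sqrt \<sigma>) * deriv \<phi> (of_real (t + (H - t) * \<sigma>)))"
  have "continuous_on {0..1} (\<lambda>\<sigma>. complex_of_real (t + (H - t) * \<sigma>))"
    by (intro continuous_intros)
  moreover have "of_real (t + (H - t) * \<sigma>) \<in> ball (0::complex) e" if "\<sigma> \<in> {0..1}" for \<sigma>
    using segment_param_bounds[OF _ that, of t H] tH by (simp only: mem_ball_0 norm_of_real) auto
  ultimately have "continuous_on {0..1} (\<lambda>\<sigma>. of_real (sqrt \<sigma>) * deriv \<phi> (of_real (t + (H - t) * \<sigma>)))"
    by (intro continuous_intros continuous_on_compose2[OF holomorphic_on_imp_continuous_on[OF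
          holomorphic_deriv[OF \<phi> open_ball]]]) auto
  then have "((\<lambda>\<sigma>. of_real (sqrt \<sigma>) * deriv \<phi> (of_real (t + (H - t) * \<sigma>))) has_integral I) {0..1}"
    unfolding I_def by (intro integrable_integral integrable_continuous_interval)
  from has_integral_mult_right[OF has_integral_Re[OF this], of "(H - t) * sqrt (H - t)"]
  have "((\<lambda>\<sigma>. sqrt ((H - t) * \<sigma>) * ((H - t) * Re (deriv \<phi> (of_real (t + (H - t) * \<sigma>)))))
      has_integral (H - t) * sqrt (H - t) * Re I) {0..1}"
    by (rule has_integral_eq[rotated]) (simp add: real_sqrt_mult)
  moreover have "Re (branch_integral \<phi> H (of_real t)) = (H - t) * sqrt (H - t) * Re I"
    using tH by (simp add: branch_integral_def I_def flip: of_real_diff)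
  ultimately show ?thesis
    by simp
qed

lemma Re_branch_integral:
  fixes \<phi> :: "complex \<Rightarrow> complex" and A :: "real \<Rightarrow> real"
  assumes \<phi>: "\<phi> holomorphic_on ball 0 e" and tH: "0 \<le> t" "t < H" "H < e"
    and A: "continuous_on UNIV A"
    and level: "\<And>y. t \<le> y \<Longrightarrow> y \<le> H \<Longrightarrow> (A (Re (\<phi> (of_real y))))\<^sup>2 = y"
  shows "Re (branch_integral \<phi> H (of_real t)) =
      integral {Re (\<phi> (of_real t))..Re (\<phi> (of_real H))} (\<lambda>x. sqrt ((A x)\<^sup>2 - t))
    - integral {Re (\<phi> (of_real H))..Re (\<phi> (of_real t))} (\<lambda>x. sqrt ((A x)\<^sup>2 - t))"
proof -
  define y where "y = (\<lambda>\<sigma>::real. t + (H - t) * \<sigma>)"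
  have y: "t \<le> y \<sigma>" "y \<sigma> \<le> H" if "\<sigma> \<in> {0..1}" for \<sigma>
    using segment_param_bounds[OF _ that, of t H] tH by (simp_all add: y_def)
  have Re_path_deriv: "((\<lambda>\<sigma>. Re (\<phi> (of_real (y \<sigma>)))) has_field_derivative
      (H - t) * Re (deriv \<phi> (of_real (y \<sigma>)))) (at \<sigma> within {0..1})" if "\<sigma> \<in> {0..1}" for \<sigma>
  proof -
    have "(\<phi> has_field_derivative deriv \<phi> (of_real (y \<sigma>))) (at (of_real (y \<sigma>)))"
      using \<phi> y[OF that] tH holomorphic_derivI[OF \<phi> open_ball] by auto
    then have "((\<lambda>u. Re (\<phi> (of_real u))) has_field_derivative Re (deriv \<phi> (of_real (y \<sigma>)))) (at (y \<sigma>))"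
      by (rule has_field_derivative_Re[OF has_vector_derivative_real_field])
    moreover have "(y has_field_derivative H - t) (at \<sigma>)"
      unfolding y_def by (auto intro!: derivative_eq_intros)
    ultimately have "((\<lambda>\<sigma>. Re (\<phi> (of_real (y \<sigma>)))) has_field_derivative
        Re (deriv \<phi> (of_real (y \<sigma>))) * (H - t)) (at \<sigma>)"
      by (rule DERIV_chain2)
    then show ?thesis
      by (simp add: mult.commute has_field_derivative_at_within)
  qed
  have "(A (Re (\<phi> (of_real (y \<sigma>)))))\<^sup>2 = t + (H - t) * \<sigma>" if "\<sigma> \<in> {0..1}" for \<sigma>
    using level[OF y[OF that]] by (simp add: y_def)
  from has_integral_level_substitution[OF A Re_path_deriv this]
  have "((\<lambda>\<sigma>. sqrt ((H - t) * \<sigma>) * ((H - t) * Re (deriv \<phi> (of_real (t + (H - t) * \<sigma>))))) has_integral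
      integral {Re (\<phi> (of_real t))..Re (\<phi> (of_real H))} (\<lambda>x. sqrt ((A x)\<^sup>2 - t))
    - integral {Re (\<phi> (of_real H))..Re (\<phi> (of_real t))} (\<lambda>x. sqrt ((A x)\<^sup>2 - t))) {0..1}"
    by (simp add: y_def)
  from has_integral_unique[OF has_integral_Re_branch_integral[OF \<phi> tH] this]
  show ?thesis .
qed

lemma Re_pos_and_deriv_bound:
  fixes G :: "complex \<Rightarrow> complex" and F :: "real \<Rightarrow> real"
  assumes G: "(G has_field_derivative G') (at 0)" and \<tau>: "0 < \<tau>" and \<kappa>: "0 < \<kappa>"
    and ReG: "\<And>t. 0 < t \<Longrightarrow> t < \<tau> \<Longrightarrow> Re (G (of_real t)) = F t"
    and F_pos: "\<And>t. 0 < t \<Longrightarrow> t < \<tau> \<Longrightarrow> 0 < F t"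
    and F_decrease: "\<And>t' t. 0 < t' \<Longrightarrow> t' < t \<Longrightarrow> t < \<tau> \<Longrightarrow> F t \<le> F t' - (t - t') * \<kappa>"
  shows "0 < Re (G 0)" "Re G' \<le> - \<kappa>"
proof -
  define g where "g = (\<lambda>t. Re (G (of_real t)))"
  have "(G has_field_derivative G') (at (of_real 0))"
    using G by simp
  then have g_deriv: "(g has_field_derivative Re G') (at 0)"
    unfolding g_def by (rule has_field_derivative_Re[OF has_vector_derivative_real_field])
  have "(g \<longlongrightarrow> g 0) (at_right 0)"
    using DERIV_isCont[OF g_deriv] unfolding isCont_def by (rule tendsto_mono[OF at_le, rotated]) simp
  then have g_tendsto: "((\<lambda>t'. g t' - (t - t') * \<kappa>) \<longlongrightarrow> g 0 - t * \<kappa>) (at_right 0)" for t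
    by (auto intro!: tendsto_eq_intros)
  have F_le: "F t \<le> g 0 - t * \<kappa>" if t: "0 < t" "t < \<tau>" for t
  proof (rule tendsto_lowerbound[OF g_tendsto])
    have "eventually (\<lambda>t'. 0 < t' \<and> t' < t) (at_right 0)"
      using eventually_at_right_real[OF t(1)] by (auto elim: eventually_mono)
    then show "eventually (\<lambda>t'. F t \<le> g t' - (t - t') * \<kappa>) (at_right 0)"
      by eventually_elim (use t ReG F_decrease in \<open>auto simp: g_def\<close>)
  qed simp
  show "0 < Re (G 0)"
    using F_le[of "\<tau> / 2"] F_pos[of "\<tau> / 2"] mult_pos_pos[OF \<tau> \<kappa>] \<tau> by (simp add: g_def)
  show "Re G' \<le> - \<kappa>"
  proof (rule tendsto_upperbound)
    show "((\<lambda>t. (g t - g 0) / (t - 0)) \<longlongrightarrow> Re G') (at_right 0)"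
      using g_deriv unfolding has_field_derivative_iff by (rule tendsto_mono[OF at_le, rotated]) simp
    have "eventually (\<lambda>t. 0 < t \<and> t < \<tau>) (at_right 0)"
      using eventually_at_right_real[OF \<tau>] by (auto elim: eventually_mono)
    then show "eventually (\<lambda>t. (g t - g 0) / (t - 0) \<le> - \<kappa>) (at_right 0)"
    proof eventually_elim
      case (elim t)
      then have "g t - g 0 \<le> - \<kappa> * t"
        using F_le[of t] ReG[of t] by (simp add: g_def algebra_simps)
      then show ?case
        using elim by (simp add: divide_le_eq)
    qed
  qed simp
qed

lemma summable_Re_coeffs_power_series:
  fixes G :: "complex \<Rightarrow> complex" and w :: complex
  assumes G: "G holomorphic_on ball 0 \<rho>" and w: "norm w < \<rho>"
  shows "summable (\<lambda>k. of_real (Re ((deriv ^^ k) G 0 / fact k)) * w ^ k)"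
proof -
  define a where "a = (\<lambda>k. (deriv ^^ k) G 0 / fact k)"
  obtain x where x: "norm w < x" "x < \<rho>"
    using w dense by blast
  then have "(\<lambda>k. a k * of_real x ^ k) sums G (of_real x)"
    using holomorphic_power_series[OF G, of "of_real x"] norm_ge_zero[of w] by (simp add: a_def)
  from sums_Re[OF this] have "(\<lambda>k. Re (a k) * x ^ k) sums Re (G (of_real x))"
    by (simp flip: of_real_power)
  then have "summable (\<lambda>k. of_real (Re (a k) * x ^ k) :: complex)"
    by (simp only: summable_complex_of_real sums_summable)
  then have "summable (\<lambda>k. of_real (Re (a k)) * of_real x ^ k :: complex)"
    by simp
  then show ?thesis
    unfolding a_def by (rule powser_inside) (use x in simp)
qed

lemma of_real_sign_times_even_power:
  fixes z :: complex
  shows "of_real ((-1) ^ k * r) * z ^ (2 * k) = of_real r * (- z\<^sup>2) ^ k"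
proof -
  have "(- z\<^sup>2) ^ k = (-1) ^ k * z ^ (2 * k)"
    by (subst power_minus) (simp add: power_mult)
  then show ?thesis
    by simp
qed

lemma power_series_Re_even:
  fixes G :: "complex \<Rightarrow> complex"
  assumes G: "G holomorphic_on ball 0 \<rho>"
  defines "c \<equiv> \<lambda>k. (-1) ^ k * Re ((deriv ^^ k) G 0 / fact k)"
  shows "\<And>z :: complex. norm z < sqrt \<rho> \<Longrightarrow> summable (\<lambda>k. of_real (c k) * z ^ (2 * k))"
    and "\<And>s. s\<^sup>2 < \<rho> \<Longrightarrow> (\<lambda>k. of_real (c k) * (\<i> * of_real s) ^ (2 * k)) sums of_real (Re (G (of_real (s\<^sup>2))))"
proof -
  define a where "a = (\<lambda>k. (deriv ^^ k) G 0 / fact k)"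
  have c_eq: "of_real (c k) * z ^ (2 * k) = of_real (Re (a k)) * (- z\<^sup>2) ^ k" for k and z :: complex
    unfolding c_def a_def by (rule of_real_sign_times_even_power)
  show "summable (\<lambda>k. of_real (c k) * z ^ (2 * k))" if z: "norm z < sqrt \<rho>" for z :: complex
  proof -
    have "0 < sqrt \<rho>"
      using z norm_ge_zero[of z] by linarith
    moreover have "(norm z)\<^sup>2 < (sqrt \<rho>)\<^sup>2"
      using z by (intro power_strict_mono) auto
    ultimately have "norm (- z\<^sup>2) < \<rho>"
      by (simp add: norm_power)
    from summable_Re_coeffs_power_series[OF G this] show ?thesis
      unfolding c_eq a_def .
  qed
  show "(\<lambda>k. of_real (c k) * (\<i> * of_real s) ^ (2 * k)) sums of_real (Re (G (of_real (s\<^sup>2))))"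
    if s: "s\<^sup>2 < \<rho>" for s
  proof -
    have "(of_real (s\<^sup>2) :: complex) \<in> ball 0 \<rho>"
      using s by (simp only: mem_ball_0 norm_of_real) simp
    from holomorphic_power_series[OF G this]
    have "(\<lambda>k. a k * of_real (s\<^sup>2) ^ k) sums G (of_real (s\<^sup>2))"
      by (simp add: a_def)
    from sums_of_real[OF sums_Re[OF this]]
    have "(\<lambda>k. of_real (Re (a k) * (s\<^sup>2) ^ k)) sums (of_real (Re (G (of_real (s\<^sup>2)))) :: complex)"
      by (simp flip: of_real_power)
    moreover have "of_real (c k) * (\<i> * of_real s) ^ (2 * k) = of_real (Re (a k) * (s\<^sup>2) ^ k)" for k
    proof -
      have "- (\<i> * of_real s)\<^sup>2 = of_real (s\<^sup>2)"
        by (simp add: power_mult_distrib)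
      then show ?thesis
        unfolding c_eq by simp
    qed
    ultimately show ?thesis
      by simp
  qed
qed

lemma sqrt_diff_ge_quotient:
  fixes a b M :: real
  assumes "0 \<le> b" "b \<le> a" "a \<le> M\<^sup>2" "0 < M"
  shows "(a - b) / (2 * M) \<le> sqrt a - sqrt b"
proof -
  have "sqrt a + sqrt b \<le> 2 * M"
    using assms real_sqrt_le_mono[of a "M\<^sup>2"] real_sqrt_le_mono[of b "M\<^sup>2"] by simp
  then have "(sqrt a - sqrt b) * (sqrt a + sqrt b) \<le> (sqrt a - sqrt b) * (2 * M)"
    using assms by (intro mult_left_mono) auto
  moreover have "(sqrt a - sqrt b) * (sqrt a + sqrt b) = a - b"
    using assms by (simp add: algebra_simps)
  ultimately show ?thesis
    using assms by (simp add: divide_le_eq mult.commute)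
qed

section \<open>Level sets of a single-hump profile\<close>

locale ks_potential =
  fixes A :: "real \<Rightarrow> real" and Xm Xp x0 :: real
  assumes continuous_A: "continuous_on UNIV A"
    and A_outside: "\<And>x. x \<notin> {Xm<..<Xp} \<Longrightarrow> A x = 0"
    and A_pos: "\<And>x. x \<in> {Xm<..<Xp} \<Longrightarrow> 0 < A x"
    and A_less_max: "\<And>x. x \<noteq> x0 \<Longrightarrow> A x < A x0"
    and card_level_set: "\<And>s. 0 < s \<Longrightarrow> s < Amax A \<Longrightarrow> card {x. A x = s} = 2"
begin

lemma A_nonneg: "0 \<le> A x"
  using A_outside A_pos by (cases "x \<in> {Xm<..<Xp}") (auto intro: less_imp_le)

lemma A_le_max: "A x \<le> A x0"
  using A_less_max by (cases "x = x0") (auto intro: less_imp_le)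

lemma Amax_eq: "Amax A = A x0"
  unfolding Amax_def by (rule cSup_eq_maximum) (auto intro: A_le_max)

lemma A_x0_pos: "0 < A x0"
  using A_nonneg[of "x0 + 1"] A_less_max[of "x0 + 1"] by simp

lemma sqrt_less_A_x0: "y < (A x0)\<^sup>2 \<Longrightarrow> sqrt y < A x0"
  using A_x0_pos by (intro real_less_lsqrt) auto

lemma x0_inside: "x0 \<in> {Xm<..<Xp}"
  using A_x0_pos A_outside by force

lemma A_IVT:
  assumes "a \<le> b" "min (A a) (A b) \<le> s" "s \<le> max (A a) (A b)"
  obtains x where "a \<le> x" "x \<le> b" "A x = s"
proof -
  have "continuous_on {a..b} A"
    using continuous_A continuous_on_subset by blast
  then show ?thesis
    using that assms IVT'[of A a s b] IVT2'[of A b s a] by (cases "A a \<le> A b") auto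
qed

context
  fixes s :: real
  assumes s: "0 < s" "s < A x0"
begin

lemma level_set_eq: "{x. A x = s} = {xminus A s, xplus A s}"
  and xminus_bounds: "xminus A s \<in> {Xm<..<x0}"
  and xplus_bounds: "xplus A s \<in> {x0<..<Xp}"
proof -
  have ends: "A Xm = 0" "A Xp = 0"
    using A_outside by auto
  obtain p where p: "Xm \<le> p" "p \<le> x0" "A p = s"
    using A_IVT[of Xm x0 s] x0_inside s ends by auto
  obtain q where q: "x0 \<le> q" "q \<le> Xp" "A q = s"
    using A_IVT[of x0 Xp s] x0_inside s ends by auto
  have p_bounds: "p \<in> {Xm<..<x0}" and q_bounds: "q \<in> {x0<..<Xp}"
    using p q s ends by (auto simp: order.order_iff_strict)
  have "card {x. A x = s} = 2"
    using card_level_set s Amax_eq by simp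
  moreover have "{p, q} \<subseteq> {x. A x = s}" "card {p, q} = 2"
    using p q p_bounds q_bounds by auto
  ultimately have level: "{x. A x = s} = {p, q}"
    by (metis card_subset_eq card.infinite zero_neq_numeral)
  have "xminus A s = p" "xplus A s = q"
    unfolding xminus_def xplus_def level using p_bounds q_bounds by auto
  then show "{x. A x = s} = {xminus A s, xplus A s}" "xminus A s \<in> {Xm<..<x0}" "xplus A s \<in> {x0<..<Xp}"
    using level p_bounds q_bounds by auto
qed

lemma A_xminus: "A (xminus A s) = s" and A_xplus: "A (xplus A s) = s"
  using level_set_eq by blast+

lemma above_level_iff: "s < A x \<longleftrightarrow> xminus A s < x \<and> x < xplus A s"
proof
  assume "s < A x"
  then have x: "x \<in> {Xm<..<Xp}"
    using A_outside s by force
  show "xminus A s < x \<and> x < xplus A s"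
  proof (rule ccontr)
    assume "\<not> ?thesis"
    then consider "x \<le> xminus A s" | "xplus A s \<le> x"
      by linarith
    then show False
    proof cases
      case 1
      obtain z where z: "Xm \<le> z" "z \<le> x" "A z = s"
        using A_IVT[of Xm x s] x s \<open>s < A x\<close> A_outside[of Xm] by auto
      moreover have "z \<in> {xminus A s, xplus A s}"
        using z(3) level_set_eq by blast
      ultimately have "z = xminus A s"
        using 1 xminus_bounds xplus_bounds by auto
      then show False
        using 1 z \<open>s < A x\<close> by auto
    next
      case 2
      obtain z where z: "x \<le> z" "z \<le> Xp" "A z = s"
        using A_IVT[of x Xp s] x s \<open>s < A x\<close> A_outside[of Xp] by auto
      moreover have "z \<in> {xminus A s, xplus A s}"
        using z(3) level_set_eq by blast
      ultimately have "z = xplus A s"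
        using 2 xminus_bounds xplus_bounds by auto
      then show False
        using 2 z \<open>s < A x\<close> by auto
    qed
  qed
next
  assume x: "xminus A s < x \<and> x < xplus A s"
  show "s < A x"
  proof (rule ccontr)
    assume "\<not> s < A x"
    then obtain z where z: "min x x0 \<le> z" "z \<le> max x x0" "A z = s"
      using A_IVT[of "min x x0" "max x x0" s] s by (cases "x \<le> x0") (auto simp: min_def max_def)
    then have "z \<in> {xminus A s, xplus A s}"
      using level_set_eq by blast
    then show False
      using x z(1,2) xminus_bounds xplus_bounds by auto
  qed
qed

lemma at_or_above_level_iff: "s \<le> A x \<longleftrightarrow> xminus A s \<le> x \<and> x \<le> xplus A s"
proof -
  have "s \<le> A x \<longleftrightarrow> s < A x \<or> x \<in> {x. A x = s}"
    by auto
  also have "\<dots> \<longleftrightarrow> (xminus A s < x \<and> x < xplus A s) \<or> x = xminus A s \<or> x = xplus A s"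
    unfolding above_level_iff level_set_eq by blast
  also have "\<dots> \<longleftrightarrow> xminus A s \<le> x \<and> x \<le> xplus A s"
    using xminus_bounds xplus_bounds by auto
  finally show ?thesis .
qed

end

lemma level_ends_strict_mono:
  assumes "0 < s" "s < s'" "s' < A x0"
  shows "xminus A s < xminus A s'" "xplus A s' < xplus A s"
  using above_level_iff[of s "xminus A s'"] above_level_iff[of s "xplus A s'"]
    A_xminus[of s'] A_xplus[of s'] assms by auto

lemma level_ends_mono:
  assumes "0 < s" "s \<le> s'" "s' < A x0"
  shows "xminus A s \<le> xminus A s'" "xplus A s' \<le> xplus A s"
  using at_or_above_level_iff[of s "xminus A s'"] at_or_above_level_iff[of s "xplus A s'"]
    A_xminus[of s'] A_xplus[of s'] assms by auto

lemma xminus_tendsto: "(xminus A \<longlongrightarrow> Xm) (at_right 0)"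
  and xplus_tendsto: "(xplus A \<longlongrightarrow> Xp) (at_right 0)"
proof -
  have close: "eventually (\<lambda>s. dist (xminus A s) Xm < \<epsilon> \<and> dist (xplus A s) Xp < \<epsilon>) (at_right 0)"
    if "\<epsilon> > 0" for \<epsilon>
  proof -
    define d where "d = min \<epsilon> (min (x0 - Xm) (Xp - x0)) / 2"
    have "d \<le> \<epsilon> / 2" "d \<le> (x0 - Xm) / 2" "d \<le> (Xp - x0) / 2" "0 < d"
      using that x0_inside by (auto simp: d_def)
    then have d: "0 < d" "d < \<epsilon>" "Xm + d < x0" "x0 < Xp - d"
      using that x0_inside by auto
    define m where "m = min (A (Xm + d)) (A (Xp - d))"
    have m: "0 < m" "m < A x0"
      using A_pos[of "Xm + d"] A_pos[of "Xp - d"] A_less_max[of "Xm + d"] d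
      by (auto simp: m_def min_less_iff_disj)
    have "dist (xminus A s) Xm < \<epsilon> \<and> dist (xplus A s) Xp < \<epsilon>" if "0 < s" "s < m" for s
    proof -
      have "xminus A s < Xm + d" "Xp - d < xplus A s"
        using above_level_iff[of s "Xm + d"] above_level_iff[of s "Xp - d"] that m
        by (auto simp: m_def)
      then show ?thesis
        using xminus_bounds[of s] xplus_bounds[of s] that m d by (auto simp: dist_real_def)
    qed
    then show ?thesis
      using eventually_at_right_real[OF m(1)] by (auto elim: eventually_mono)
  qed
  show "(xminus A \<longlongrightarrow> Xm) (at_right 0)" "(xplus A \<longlongrightarrow> Xp) (at_right 0)"
    by (rule tendstoI, erule close[THEN eventually_mono], simp)+
qed

lemma integrable_level_integrand: "(\<lambda>x. sqrt ((A x)\<^sup>2 - c)) integrable_on {a..b}"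
  by (intro integrable_continuous_interval continuous_intros continuous_on_subset[OF continuous_A]) auto

lemma level_integrand_ge:
  assumes "0 < s" "s < A x0" "x \<in> {xminus A s..xplus A s}" "0 \<le> c" "c \<le> s"
  shows "sqrt (s\<^sup>2 - c\<^sup>2) \<le> sqrt ((A x)\<^sup>2 - c\<^sup>2)"
proof -
  have "s \<le> A x"
    using at_or_above_level_iff[of s x] assms by auto
  then show ?thesis
    using assms by (simp add: power_mono)
qed

lemma Phi_pos:
  assumes s: "0 < s" "s < A x0"
  shows "0 < Phi A s"
proof -
  define s' where "s' = (s + A x0) / 2"
  have s': "s < s'" "s' < A x0"
    using s by (auto simp: s'_def)
  have "s\<^sup>2 < s'\<^sup>2"
    using s s' by (intro power_strict_mono) auto
  then have "0 < (xplus A s' - xminus A s') * sqrt (s'\<^sup>2 - s\<^sup>2)"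
    using xminus_bounds[of s'] xplus_bounds[of s'] s s' by auto
  also have "\<dots> = integral {xminus A s'..xplus A s'} (\<lambda>x. sqrt (s'\<^sup>2 - s\<^sup>2))"
    using xminus_bounds[of s'] xplus_bounds[of s'] s s' by simp
  also have "\<dots> \<le> integral {xminus A s'..xplus A s'} (\<lambda>x. sqrt ((A x)\<^sup>2 - s\<^sup>2))"
    using s s' by (intro integral_le integrable_level_integrand level_integrand_ge) auto
  also have "\<dots> \<le> Phi A s"
    unfolding Phi_def
  proof (rule integral_subset_le[OF _ integrable_level_integrand integrable_level_integrand])
    show "{xminus A s'..xplus A s'} \<subseteq> {xminus A s..xplus A s}"
      using level_ends_strict_mono[of s s'] s s' by auto
    show "\<forall>x\<in>{xminus A s..xplus A s}. 0 \<le> sqrt ((A x)\<^sup>2 - s\<^sup>2)"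
      using level_integrand_ge[of s _ s] s by auto
  qed
  finally show ?thesis .
qed

lemma Phi_le:
  assumes s: "0 < s" "s < A x0"
  shows "Phi A s \<le> (Xp - Xm) * sqrt ((A x0)\<^sup>2 - s\<^sup>2)"
proof -
  have "Phi A s \<le> integral {xminus A s..xplus A s} (\<lambda>x. sqrt ((A x0)\<^sup>2 - s\<^sup>2))"
    unfolding Phi_def using A_le_max A_nonneg
    by (intro integral_le integrable_level_integrand) (auto intro!: power_mono)
  also have "\<dots> \<le> (Xp - Xm) * sqrt ((A x0)\<^sup>2 - s\<^sup>2)"
    using xminus_bounds[OF s] xplus_bounds[OF s] s by (auto intro!: mult_right_mono power_mono)
  finally show ?thesis .
qed

lemma Phi_tendsto_zero: "(Phi A \<longlongrightarrow> 0) (at_left (Amax A))"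
proof -
  have "((\<lambda>s. (Xp - Xm) * sqrt ((A x0)\<^sup>2 - s\<^sup>2)) \<longlongrightarrow> (Xp - Xm) * sqrt ((A x0)\<^sup>2 - (A x0)\<^sup>2))
      (at_left (A x0))"
    by (intro tendsto_intros tendsto_ident_at)
  then have bound: "((\<lambda>s. (Xp - Xm) * sqrt ((A x0)\<^sup>2 - s\<^sup>2)) \<longlongrightarrow> 0) (at_left (A x0))"
    by simp
  have near: "eventually (\<lambda>s. 0 < s \<and> s < A x0) (at_left (A x0))"
    using eventually_at_left_real[OF A_x0_pos] by (auto elim: eventually_mono)
  have "eventually (\<lambda>s. 0 \<le> Phi A s) (at_left (A x0))"
    using near by eventually_elim (auto intro: less_imp_le Phi_pos)
  moreover have "eventually (\<lambda>s. Phi A s \<le> (Xp - Xm) * sqrt ((A x0)\<^sup>2 - s\<^sup>2)) (at_left (A x0))"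
    using near by eventually_elim (auto intro: Phi_le)
  ultimately show ?thesis
    unfolding Amax_eq by (rule tendsto_sandwich[OF _ _ tendsto_const bound])
qed

lemma level_integrand_decrease:
  assumes s: "0 < s'" "s' < s" "s < A x0" and x: "x \<in> {xminus A s..xplus A s}"
  shows "sqrt ((A x)\<^sup>2 - s\<^sup>2) \<le> sqrt ((A x)\<^sup>2 - s'\<^sup>2) - (s\<^sup>2 - s'\<^sup>2) / (2 * A x0)"
proof -
  have "s \<le> A x"
    using at_or_above_level_iff[of s x] x s by auto
  then have "s\<^sup>2 \<le> (A x)\<^sup>2"
    using s by (intro power_mono) auto
  moreover have "(A x)\<^sup>2 \<le> (A x0)\<^sup>2"
    using A_le_max[of x] A_nonneg[of x] by (rule power_mono)
  moreover have "s'\<^sup>2 < s\<^sup>2"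
    using s by (intro power_strict_mono) auto
  ultimately show ?thesis
    using sqrt_diff_ge_quotient[of "(A x)\<^sup>2 - s\<^sup>2" "(A x)\<^sup>2 - s'\<^sup>2" "A x0"] A_x0_pos zero_le_power2[of s']
    by simp
qed

lemma Phi_decrease:
  assumes s: "0 < s'" "s' < s" "s < s0" "s0 < A x0"
  shows "Phi A s \<le> Phi A s' - (s\<^sup>2 - s'\<^sup>2) * ((xplus A s0 - xminus A s0) / (2 * A x0))"
proof -
  define k where "k = (s\<^sup>2 - s'\<^sup>2) / (2 * A x0)"
  have k: "0 \<le> k"
    using s A_x0_pos by (auto simp: k_def intro!: power_mono)
  have "Phi A s \<le> integral {xminus A s..xplus A s} (\<lambda>x. sqrt ((A x)\<^sup>2 - s'\<^sup>2) - k)"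
    unfolding Phi_def k_def using s level_integrand_decrease[of s' s]
    by (intro integral_le integrable_diff integrable_level_integrand) auto
  also have "\<dots> = integral {xminus A s..xplus A s} (\<lambda>x. sqrt ((A x)\<^sup>2 - s'\<^sup>2)) - k * (xplus A s - xminus A s)"
    using xminus_bounds[of s] xplus_bounds[of s] s
    by (subst integral_diff) (auto intro: integrable_level_integrand)
  also have "\<dots> \<le> Phi A s' - k * (xplus A s0 - xminus A s0)"
  proof (rule diff_mono)
    show "integral {xminus A s..xplus A s} (\<lambda>x. sqrt ((A x)\<^sup>2 - s'\<^sup>2)) \<le> Phi A s'"
      unfolding Phi_def
    proof (rule integral_subset_le[OF _ integrable_level_integrand integrable_level_integrand])
      show "{xminus A s..xplus A s} \<subseteq> {xminus A s'..xplus A s'}"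
        using level_ends_strict_mono[of s' s] s by auto
      show "\<forall>x\<in>{xminus A s'..xplus A s'}. 0 \<le> sqrt ((A x)\<^sup>2 - s'\<^sup>2)"
        using level_integrand_ge[of s' _ s'] s by auto
    qed
    show "k * (xplus A s0 - xminus A s0) \<le> k * (xplus A s - xminus A s)"
      using level_ends_strict_mono[of s s0] s k by (auto intro!: mult_left_mono)
  qed
  finally show ?thesis
    by (simp add: k_def algebra_simps)
qed

lemma level_interval_above:
  assumes r: "0 < r" "r \<le> sa" "r \<le> sb" and s: "sa < A x0" "sb < A x0"
    and x: "x \<in> {xminus A sa..xplus A sb}"
  shows "r \<le> A x"
  using level_ends_mono[OF r(1,2) s(1)] level_ends_mono[OF r(1,3) s(2)] at_or_above_level_iff[of r x] r s x
  by auto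

lemma Phi_split:
  assumes s: "0 < s" "s \<le> sa" "s \<le> sb" "sa < A x0" "sb < A x0"
  defines "f \<equiv> \<lambda>x. sqrt ((A x)\<^sup>2 - s\<^sup>2)"
  shows "Phi A s = integral {xminus A s..xminus A sa} f + integral {xminus A sa..xplus A sb} f
    + integral {xplus A sb..xplus A s} f"
proof -
  have ends: "xminus A s \<le> xminus A sa" "xminus A sa \<le> xplus A sb" "xplus A sb \<le> xplus A s"
    using level_ends_mono[of s sa] level_ends_mono[of s sb] xminus_bounds[of sa] xplus_bounds[of sb] s
    by force+
  have "Phi A s = integral {xminus A s..xminus A sa} f + integral {xminus A sa..xplus A s} f"
    unfolding Phi_def f_def using ends
    by (intro Henstock_Kurzweil_Integration.integral_combine[symmetric] integrable_level_integrand) auto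
  also have "integral {xminus A sa..xplus A s} f = integral {xminus A sa..xplus A sb} f + integral {xplus A sb..xplus A s} f"
    unfolding f_def using ends
    by (intro Henstock_Kurzweil_Integration.integral_combine[symmetric] integrable_level_integrand) auto
  finally show ?thesis
    by simp
qed

lemma middle_integral_continuation:
  assumes r: "0 < r" "r \<le> sa" "r \<le> sb" "sa < A x0" "sb < A x0"
  defines "M \<equiv> \<lambda>z. integral {xminus A sa..xplus A sb} (\<lambda>x. csqrt (of_real ((A x)\<^sup>2) - z))"
  shows "M holomorphic_on ball 0 (r\<^sup>2)"
    and "\<And>s. 0 < s \<Longrightarrow> s < r \<Longrightarrow>
      Re (M (of_real (s\<^sup>2))) = integral {xminus A sa..xplus A sb} (\<lambda>x. sqrt ((A x)\<^sup>2 - s\<^sup>2))"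
proof -
  have cont: "continuous_on {xminus A sa..xplus A sb} (\<lambda>x. (A x)\<^sup>2)"
    by (intro continuous_intros continuous_on_subset[OF continuous_A]) auto
  have above: "s\<^sup>2 \<le> (A x)\<^sup>2" if "0 \<le> s" "s \<le> r" "x \<in> {xminus A sa..xplus A sb}" for s x
    using level_interval_above[OF r that(3)] that by (intro power_mono) auto
  have "M holomorphic_on {z. Re z < r\<^sup>2}"
    unfolding M_def using r(1) by (intro holomorphic_on_integral_csqrt[OF cont] above) auto
  then show "M holomorphic_on ball 0 (r\<^sup>2)"
    using ball_subset_Re_halfspace by (rule holomorphic_on_subset)
  show "Re (M (of_real (s\<^sup>2))) = integral {xminus A sa..xplus A sb} (\<lambda>x. sqrt ((A x)\<^sup>2 - s\<^sup>2))"
    if "0 < s" "s < r" for s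
  proof -
    have "s\<^sup>2 \<le> (A x)\<^sup>2" if "x \<in> {xminus A sa..xplus A sb}" for x
      using above[OF _ _ that, of s] \<open>0 < s\<close> \<open>s < r\<close> by simp
    from integral_csqrt_of_real[OF cont this] show ?thesis
      by (simp add: M_def)
  qed
qed

lemma Phi_continuation_signs_at_0:
  assumes \<rho>: "0 < \<rho>" and G: "G holomorphic_on ball 0 \<rho>"
    and ReG: "\<And>s. 0 < s \<Longrightarrow> s\<^sup>2 < \<rho> \<Longrightarrow> Re (G (of_real (s\<^sup>2))) = Phi A s"
  shows "0 < Re (G 0)" "Re (deriv G 0) < 0"
proof -
  define s0 where "s0 = A x0 / 2"
  define \<kappa> where "\<kappa> = (xplus A s0 - xminus A s0) / (2 * A x0)"
  define \<tau> where "\<tau> = min \<rho> (s0\<^sup>2)"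
  have s0: "0 < s0" "s0 < A x0"
    using A_x0_pos by (auto simp: s0_def)
  have \<tau>: "0 < \<tau>"
    using \<rho> s0 by (simp add: \<tau>_def)
  have \<kappa>: "0 < \<kappa>"
    using xminus_bounds[OF s0] xplus_bounds[OF s0] A_x0_pos by (simp add: \<kappa>_def)
  have sqrt_below: "sqrt t < s0" if "t < \<tau>" for t
    using that s0 by (intro real_less_lsqrt) (auto simp: \<tau>_def)
  have "Re (G (of_real t)) = Phi A (sqrt t)" "0 < Phi A (sqrt t)" if t: "0 < t" "t < \<tau>" for t
    using ReG[of "sqrt t"] Phi_pos[of "sqrt t"] sqrt_below[OF t(2)] t s0 by (simp_all add: \<tau>_def)
  moreover have "Phi A (sqrt t) \<le> Phi A (sqrt t') - (t - t') * \<kappa>" if t: "0 < t'" "t' < t" "t < \<tau>" for t' t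
    using Phi_decrease[of "sqrt t'" "sqrt t" s0] sqrt_below[OF t(3)] t s0 by (simp add: \<kappa>_def)
  moreover have "(G has_field_derivative deriv G 0) (at 0)"
    using holomorphic_derivI[OF G open_ball] \<rho> by simp
  ultimately show "0 < Re (G 0)" "Re (deriv G 0) < 0"
    using Re_pos_and_deriv_bound[of G _ \<tau> \<kappa> "\<lambda>t. Phi A (sqrt t)"] \<tau> \<kappa> by force+
qed

end

section \<open>Analytic continuation of the phase integral\<close>

locale ks_analytic = ks_potential +
  fixes h :: "complex \<Rightarrow> complex" and U :: "complex set"
  assumes open_U: "open U" and reals_in_U: "of_real ` {Xm..Xp} \<subseteq> U"
    and holomorphic_h: "h holomorphic_on U"
    and h_of_real: "\<And>x. x \<in> {Xm..Xp} \<Longrightarrow> h (of_real x) = of_real ((A x)\<^sup>2)"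
    and deriv_h_ends: "\<And>X. X \<in> {Xm, Xp} \<Longrightarrow> deriv h (of_real X) \<noteq> 0"
begin

lemma level_branch_holomorphic:
  assumes X: "X \<in> {Xm, Xp}"
    and \<xi>_level: "\<And>s. 0 < s \<Longrightarrow> s < A x0 \<Longrightarrow> A (\<xi> s) = s \<and> \<xi> s \<in> {Xm..Xp}"
    and \<xi>_lim: "(\<xi> \<longlongrightarrow> X) (at_right 0)"
  obtains e \<phi> where "0 < e" "e < (A x0)\<^sup>2" "\<phi> holomorphic_on ball 0 e"
    "\<And>y. 0 < y \<Longrightarrow> y < e \<Longrightarrow> \<phi> (of_real y) = of_real (\<xi> (sqrt y))"
proof -
  have X_in: "X \<in> {Xm..Xp}"
    using X x0_inside by auto
  have XU: "of_real X \<in> U"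
    using X_in reals_in_U by auto
  have hX: "h (of_real X) = 0"
    using X h_of_real[OF X_in] A_outside by auto
  obtain r e \<phi> where r: "0 < r" "0 < e" "inj_on h (ball (of_real X) r)" "\<phi> holomorphic_on ball 0 e"
    and \<phi>: "\<And>y. y \<in> ball 0 e \<Longrightarrow> \<phi> y \<in> ball (of_real X) r \<and> h (\<phi> y) = y"
    using holomorphic_local_inverse[OF holomorphic_h open_U XU deriv_h_ends[OF X], unfolded hX] by blast
  obtain \<delta> where \<delta>: "0 < \<delta>" "\<And>s. 0 < s \<Longrightarrow> s < \<delta> \<Longrightarrow> dist (\<xi> s) X < r"
    using \<xi>_lim[THEN tendstoD, OF r(1)] by (auto simp: eventually_at_right_field)
  define m where "m = min \<delta> (A x0 / 2)"
  have m: "0 < m" "m < A x0"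
    using \<delta> A_x0_pos by (auto simp: m_def)
  show ?thesis
  proof (rule that[of "min e (m\<^sup>2)" \<phi>])
    show "0 < min e (m\<^sup>2)"
      using r m by simp
    have "m\<^sup>2 < (A x0)\<^sup>2"
      using m by (intro power_strict_mono) auto
    then show "min e (m\<^sup>2) < (A x0)\<^sup>2"
      by (rule min.strict_coboundedI2)
    show "\<phi> holomorphic_on ball 0 (min e (m\<^sup>2))"
      using r(4) by (rule holomorphic_on_subset) auto
    fix y assume y: "0 < y" "y < min e (m\<^sup>2)"
    define s where "s = sqrt y"
    have s: "0 < s" "s < m"
      using y m by (auto simp: s_def real_sqrt_less_iff intro!: real_less_lsqrt)
    then have "A (\<xi> s) = s" "\<xi> s \<in> {Xm..Xp}"
      using \<xi>_level m by (auto simp: m_def)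
    then have "h (of_real (\<xi> s)) = of_real y"
      using h_of_real y by (simp add: s_def flip: of_real_power)
    moreover have "of_real (\<xi> s) \<in> ball (of_real X :: complex) r"
      using \<delta>(2)[of s] s by (auto simp: m_def dist_commute)
    moreover have "\<phi> (of_real y) \<in> ball (of_real X) r" "h (\<phi> (of_real y)) = of_real y"
      using \<phi>[of "of_real y"] y by auto
    ultimately show "\<phi> (of_real y) = of_real (\<xi> (sqrt y))"
      using inj_onD[OF r(3), of "\<phi> (of_real y)" "of_real (\<xi> s)"] unfolding s_def by simp
  qed
qed

lemma Re_branch_integral_level:
  assumes \<xi>_level: "\<And>s. 0 < s \<Longrightarrow> s < A x0 \<Longrightarrow> A (\<xi> s) = s"
    and \<phi>: "\<phi> holomorphic_on ball 0 e" "e \<le> (A x0)\<^sup>2"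
    and \<phi>_\<xi>: "\<And>y. 0 < y \<Longrightarrow> y < e \<Longrightarrow> \<phi> (of_real y) = of_real (\<xi> (sqrt y))"
    and tH: "0 < t" "t < H" "H < e"
  shows "Re (branch_integral \<phi> H (of_real t)) =
      integral {\<xi> (sqrt t)..\<xi> (sqrt H)} (\<lambda>x. sqrt ((A x)\<^sup>2 - t))
    - integral {\<xi> (sqrt H)..\<xi> (sqrt t)} (\<lambda>x. sqrt ((A x)\<^sup>2 - t))"
proof -
  have "(A (Re (\<phi> (of_real y))))\<^sup>2 = y" if "t \<le> y" "y \<le> H" for y
  proof -
    have "sqrt y < A x0"
      using that tH \<phi>(2) A_x0_pos by (auto simp: real_sqrt_less_iff intro!: real_less_lsqrt)
    then show ?thesis
      using that tH \<xi>_level[of "sqrt y"] \<phi>_\<xi>[of y] by simp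
  qed
  then show ?thesis
    using Re_branch_integral[OF \<phi>(1) _ tH(2,3) continuous_A] tH \<phi>_\<xi>[of t] \<phi>_\<xi>[of H] by simp
qed

lemma xminus_branch:
  obtains e \<phi> where "0 < e" "e < (A x0)\<^sup>2" "\<phi> holomorphic_on ball 0 e"
    "\<And>t H. 0 < t \<Longrightarrow> t < H \<Longrightarrow> H < e \<Longrightarrow> Re (branch_integral \<phi> H (of_real t)) =
       integral {xminus A (sqrt t)..xminus A (sqrt H)} (\<lambda>x. sqrt ((A x)\<^sup>2 - t))"
proof -
  have "A (xminus A s) = s \<and> xminus A s \<in> {Xm..Xp}" if "0 < s" "s < A x0" for s
    using A_xminus[OF that] xminus_bounds[OF that] x0_inside by auto
  then obtain e \<phi> where e: "0 < e" "e < (A x0)\<^sup>2" and \<phi>: "\<phi> holomorphic_on ball 0 e"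
    and \<phi>_xminus: "\<And>y. 0 < y \<Longrightarrow> y < e \<Longrightarrow> \<phi> (of_real y) = of_real (xminus A (sqrt y))"
    using level_branch_holomorphic[of Xm, OF _ _ xminus_tendsto] by blast
  show ?thesis
  proof (rule that[OF e \<phi>])
    fix t H assume tH: "0 < t" "t < H" "H < e"
    then have "xminus A (sqrt t) < xminus A (sqrt H)"
      using level_ends_strict_mono sqrt_less_A_x0[of H] e by simp
    then show "Re (branch_integral \<phi> H (of_real t)) =
        integral {xminus A (sqrt t)..xminus A (sqrt H)} (\<lambda>x. sqrt ((A x)\<^sup>2 - t))"
      using Re_branch_integral_level[OF A_xminus \<phi> less_imp_le[OF e(2)] \<phi>_xminus tH] by simp
  qed
qed

lemma xplus_branch:
  obtains e \<phi> where "0 < e" "e < (A x0)\<^sup>2" "\<phi> holomorphic_on ball 0 e"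
    "\<And>t H. 0 < t \<Longrightarrow> t < H \<Longrightarrow> H < e \<Longrightarrow> Re (branch_integral \<phi> H (of_real t)) =
       - integral {xplus A (sqrt H)..xplus A (sqrt t)} (\<lambda>x. sqrt ((A x)\<^sup>2 - t))"
proof -
  have "A (xplus A s) = s \<and> xplus A s \<in> {Xm..Xp}" if "0 < s" "s < A x0" for s
    using A_xplus[OF that] xplus_bounds[OF that] x0_inside by auto
  then obtain e \<phi> where e: "0 < e" "e < (A x0)\<^sup>2" and \<phi>: "\<phi> holomorphic_on ball 0 e"
    and \<phi>_xplus: "\<And>y. 0 < y \<Longrightarrow> y < e \<Longrightarrow> \<phi> (of_real y) = of_real (xplus A (sqrt y))"
    using level_branch_holomorphic[of Xp, OF _ _ xplus_tendsto] by blast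
  show ?thesis
  proof (rule that[OF e \<phi>])
    fix t H assume tH: "0 < t" "t < H" "H < e"
    then have "xplus A (sqrt H) < xplus A (sqrt t)"
      using level_ends_strict_mono sqrt_less_A_x0[of H] e by simp
    then show "Re (branch_integral \<phi> H (of_real t)) =
        - integral {xplus A (sqrt H)..xplus A (sqrt t)} (\<lambda>x. sqrt ((A x)\<^sup>2 - t))"
      using Re_branch_integral_level[OF A_xplus \<phi> less_imp_le[OF e(2)] \<phi>_xplus tH] by simp
  qed
qed

lemma Phi_analytic:
  obtains \<rho> G where "0 < \<rho>" "G holomorphic_on ball 0 \<rho>"
    "\<And>s. 0 < s \<Longrightarrow> s\<^sup>2 < \<rho> \<Longrightarrow> Re (G (of_real (s\<^sup>2))) = Phi A s"
proof -
  obtain eL \<phi>L where eL: "0 < eL" "eL < (A x0)\<^sup>2" and \<phi>L: "\<phi>L holomorphic_on ball 0 eL"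
    and left: "\<And>t H. 0 < t \<Longrightarrow> t < H \<Longrightarrow> H < eL \<Longrightarrow> Re (branch_integral \<phi>L H (of_real t)) =
       integral {xminus A (sqrt t)..xminus A (sqrt H)} (\<lambda>x. sqrt ((A x)\<^sup>2 - t))"
    using xminus_branch by blast
  obtain eR \<phi>R where eR: "0 < eR" "eR < (A x0)\<^sup>2" and \<phi>R: "\<phi>R holomorphic_on ball 0 eR"
    and right: "\<And>t H. 0 < t \<Longrightarrow> t < H \<Longrightarrow> H < eR \<Longrightarrow> Re (branch_integral \<phi>R H (of_real t)) =
       - integral {xplus A (sqrt H)..xplus A (sqrt t)} (\<lambda>x. sqrt ((A x)\<^sup>2 - t))"
    using xplus_branch by blast
  define HL where "HL = eL / 2"
  define HR where "HR = eR / 2"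
  define r where "r = min (sqrt HL) (sqrt HR)"
  define M where "M = (\<lambda>z. integral {xminus A (sqrt HL)..xplus A (sqrt HR)} (\<lambda>x. csqrt (of_real ((A x)\<^sup>2) - z)))"
  define G where "G = (\<lambda>z. branch_integral \<phi>L HL z + M z - branch_integral \<phi>R HR z)"
  have H: "0 < HL" "HL < eL" "0 < HR" "HR < eR"
    using eL eR by (auto simp: HL_def HR_def)
  have r: "0 < r" "r \<le> sqrt HL" "r \<le> sqrt HR" "sqrt HL < A x0" "sqrt HR < A x0"
    using H eL eR sqrt_less_A_x0 by (auto simp: r_def)
  have "r\<^sup>2 \<le> (sqrt HL)\<^sup>2" "r\<^sup>2 \<le> (sqrt HR)\<^sup>2"
    using r by (intro power_mono; simp)+
  then have r2: "r\<^sup>2 \<le> HL" "r\<^sup>2 \<le> HR"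
    using H by simp_all
  show ?thesis
  proof (rule that[of "r\<^sup>2" G])
    show "0 < r\<^sup>2"
      using r by simp
    have "branch_integral \<phi>L HL holomorphic_on ball 0 (r\<^sup>2)"
      using holomorphic_branch_integral[OF \<phi>L H(1,2)] by (rule holomorphic_on_subset) (use r2 in auto)
    moreover have "branch_integral \<phi>R HR holomorphic_on ball 0 (r\<^sup>2)"
      using holomorphic_branch_integral[OF \<phi>R H(3,4)] by (rule holomorphic_on_subset) (use r2 in auto)
    moreover have "M holomorphic_on ball 0 (r\<^sup>2)"
      unfolding M_def by (rule middle_integral_continuation(1)[OF r])
    ultimately show "G holomorphic_on ball 0 (r\<^sup>2)"
      unfolding G_def by (intro holomorphic_intros)
  next
    fix s assume s: "0 < s" "s\<^sup>2 < r\<^sup>2"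
    then have "s < r"
      using r(1) by (simp add: power2_less_imp_less)
    then show "Re (G (of_real (s\<^sup>2))) = Phi A s"
      using Phi_split[of s "sqrt HL" "sqrt HR"] left[of "s\<^sup>2" HL] right[of "s\<^sup>2" HR]
        middle_integral_continuation(2)[OF r s(1)] s r r2 H
      by (simp add: G_def M_def)
  qed
qed

lemma Phi_even_power_series:
  obtains r c where "0 < r"
    "\<forall>z\<in>ball (0::complex) r. summable (\<lambda>k. complex_of_real (c k) * z ^ (2 * k))"
    "\<forall>s. 0 < s \<and> s < r \<longrightarrow>
       (\<lambda>k. complex_of_real (c k) * (\<i> * complex_of_real s) ^ (2 * k)) sums complex_of_real (Phi A s)"
    "c 0 > 0" "c 1 > 0"
proof -
  obtain \<rho> G where \<rho>: "0 < \<rho>" and G: "G holomorphic_on ball 0 \<rho>"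
    and ReG: "\<And>s. 0 < s \<Longrightarrow> s\<^sup>2 < \<rho> \<Longrightarrow> Re (G (of_real (s\<^sup>2))) = Phi A s"
    using Phi_analytic by blast
  define c where "c = (\<lambda>k. (-1) ^ k * Re ((deriv ^^ k) G 0 / fact k))"
  show ?thesis
  proof (rule that[of "sqrt \<rho>" c])
    show "0 < sqrt \<rho>"
      using \<rho> by simp
    show "\<forall>z\<in>ball 0 (sqrt \<rho>). summable (\<lambda>k. complex_of_real (c k) * z ^ (2 * k))"
      using power_series_Re_even(1)[OF G] by (simp add: c_def)
    show "\<forall>s. 0 < s \<and> s < sqrt \<rho> \<longrightarrow>
        (\<lambda>k. complex_of_real (c k) * (\<i> * complex_of_real s) ^ (2 * k)) sums complex_of_real (Phi A s)"
    proof (intro allI impI)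
      fix s assume s: "0 < s \<and> s < sqrt \<rho>"
      then have "s\<^sup>2 < \<rho>"
        using real_sqrt_less_iff[of "s\<^sup>2" \<rho>] by simp
      then have "(\<lambda>k. complex_of_real (c k) * (\<i> * complex_of_real s) ^ (2 * k))
          sums complex_of_real (Re (G (of_real (s\<^sup>2))))"
        unfolding c_def by (rule power_series_Re_even(2)[OF G])
      then show "(\<lambda>k. complex_of_real (c k) * (\<i> * complex_of_real s) ^ (2 * k)) sums complex_of_real (Phi A s)"
        using ReG[of s] s \<open>s\<^sup>2 < \<rho>\<close> by simp
    qed
    show "0 < c 0" "0 < c 1"
      using Phi_continuation_signs_at_0[OF \<rho> G ReG] by (simp_all add: c_def)
  qed
qed

end

lemma semicircular_KS_imp_ks_analytic:
  assumes "semicircular_KS A Xm Xp"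
  obtains x0 h U where "ks_analytic A Xm Xp x0 h U"
proof -
  obtain u c U g x0 where lt: "Xm < Xp" and clos: "closure {x. A x \<noteq> 0} = {Xm..Xp}"
    and contA: "continuous_on UNIV A" and c: "0 < c"
    and u: "\<forall>x\<in>{Xm..Xp}. c \<le> u x \<and> A x = u x * sqrt ((Xp - x) * (x - Xm))"
    and U: "open U" "complex_of_real ` {Xm..Xp} \<subseteq> U" and g: "g holomorphic_on U"
    and gu: "\<forall>x\<in>{Xm..Xp}. g (complex_of_real x) = complex_of_real (u x)"
    and max: "\<forall>x. x \<noteq> x0 \<longrightarrow> A x < A x0"
    and card: "\<forall>s. 0 < s \<and> s < Amax A \<longrightarrow> card {x. A x = s} = 2"
    using assms unfolding semicircular_KS_def by (elim conjE exE) blast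
  note u = u[rule_format] and gu = gu[rule_format]
  have outside: "A x = 0" if "x \<notin> {Xm<..<Xp}" for x
  proof (cases "x \<in> {Xm..Xp}")
    case True
    then have "(Xp - x) * (x - Xm) = 0"
      using that by auto
    then show ?thesis
      using u[OF True] by simp
  next
    case False
    then show ?thesis
      using closure_subset[of "{x. A x \<noteq> 0}"] unfolding clos by auto
  qed
  have inside: "0 < A x" if "x \<in> {Xm<..<Xp}" for x
    using u[of x] c that by (auto intro!: mult_pos_pos)
  define h where "h = (\<lambda>z. (g z)\<^sup>2 * (of_real Xp - z) * (z - of_real Xm))"
  have "deriv h (of_real X) \<noteq> 0" if X: "X \<in> {Xm, Xp}" for X
  proof -
    have "X \<in> {Xm..Xp}"
      using X lt by auto
    then have "of_real X \<in> U" "g (of_real X) \<noteq> 0"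
      using U(2) gu u c by force+
    then show ?thesis
      unfolding h_def using X lt by (intro deriv_square_times_quadratic_nonzero[OF g U(1)]) auto
  qed
  moreover have "h (of_real x) = of_real ((A x)\<^sup>2)" if "x \<in> {Xm..Xp}" for x
    using u gu that by (simp add: h_def power_mult_distrib)
  moreover have "h holomorphic_on U"
    unfolding h_def by (intro holomorphic_intros g)
  ultimately have "ks_analytic A Xm Xp x0 h U"
    using contA outside inside max card U by unfold_locales auto
  then show ?thesis
    using that by blast
qed

theorem proposition1:
  fixes A :: "real \<Rightarrow> real" and Xm Xp :: real
  assumes "semicircular_KS A Xm Xp"
  shows "(\<forall>s. 0 < s \<and> s < Amax A \<longrightarrow> Phi A s > 0) \<and>
         (Phi A \<longlongrightarrow> 0) (at_left (Amax A)) \<and>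
         (\<exists>r>0. \<exists>c :: nat \<Rightarrow> real.
            (\<forall>z\<in>ball (0::complex) r. summable (\<lambda>k. complex_of_real (c k) * z ^ (2 * k))) \<and>
            (\<forall>s. 0 < s \<and> s < r \<and> s < Amax A \<longrightarrow>
               (\<lambda>k. complex_of_real (c k) * (\<i> * complex_of_real s) ^ (2 * k))
                 sums complex_of_real (Phi A s)) \<and>
            c 0 > 0 \<and> c 1 > 0)"
proof -
  obtain x0 h U where "ks_analytic A Xm Xp x0 h U"
    using semicircular_KS_imp_ks_analytic[OF assms] .
  then interpret ks_analytic A Xm Xp x0 h U .
  obtain r c where "0 < r"
    "\<forall>z\<in>ball (0::complex) r. summable (\<lambda>k. complex_of_real (c k) * z ^ (2 * k))"
    "\<forall>s. 0 < s \<and> s < r \<longrightarrow>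
       (\<lambda>k. complex_of_real (c k) * (\<i> * complex_of_real s) ^ (2 * k)) sums complex_of_real (Phi A s)"
    "c 0 > 0" "c 1 > 0"
    by (rule Phi_even_power_series)
  then show ?thesis
    using Phi_pos Phi_tendsto_zero unfolding Amax_eq by blast
qed

end
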